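(* Let $k\ge\ell\ge1$ be integers with $k+\ell\ge6$, let $f$ be the function below, and let $\alpha\in[0,\frac12]$. Then the function $$f_*(d)=\alpha(1-\alpha)^{k+\ell}f(d)+\frac{(k-1)^{k-1}\ell^\ell}{(k+\ell-1)^{k+\ell-1}}(1-\alpha)\alpha^{k+\ell}(1-d)$$ attains its maximum over $d\in[0,1]$ at some $d\in\left[\frac{k-1}{k+\ell-1},\frac{k}{k+\ell}\right]$.
   Context: $f:[0,1]\to\mathbb R$ is defined by $f(x)=\frac{(k-1)^{k-1}\ell^\ell}{(k+\ell-1)^{k+\ell-1}}x$ for $x\in[0,\frac{k-1}{k+\ell-1}]$, $f(x)=x^k(1-x)^\ell$ for $x\in[\frac{k-1}{k+\ell-1},\frac{k}{k+\ell}]$, and $f(x)=\frac{k^k\ell^\ell}{(k+\ell)^{k+\ell}}$ for $x\in[\frac{k}{k+\ell},1]$. *)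

theory Defs
  imports Complex_Main
begin

(* The constant (k-1)^(k-1) l^l / (k+l-1)^(k+l-1); with 0^0 = 1. Requires k >= 1. *)
definition cst :: "nat \<Rightarrow> nat \<Rightarrow> real" where
  "cst k l = (real k - 1) ^ (k - 1) * (real l) ^ l / (real k + real l - 1) ^ (k + l - 1)"

definition fpw :: "nat \<Rightarrow> nat \<Rightarrow> real \<Rightarrow> real" where
  "fpw k l x =
     (if x \<le> (real k - 1) / (real k + real l - 1) then cst k l * x
      else if x \<le> real k / (real k + real l) then x ^ k * (1 - x) ^ l
      else (real k) ^ k * (real l) ^ l / (real k + real l) ^ (k + l))"

definition fstar :: "nat \<Rightarrow> nat \<Rightarrow> real \<Rightarrow> real \<Rightarrow> real" where
  "fstar k l \<alpha> d = \<alpha> * (1 - \<alpha>) ^ (k + l) * fpw k l d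
      + cst k l * (1 - \<alpha>) * \<alpha> ^ (k + l) * (1 - d)"

end

theory Submission
  imports Defs
begin

text \<open>
  On \<open>[0, p]\<close>, with \<open>p = (k-1)/(k+l-1)\<close>, the function \<open>f\<^sub>*\<close> is affine with slope
  \<open>\<alpha>(1-\<alpha>)\<^sup>k\<^sup>+\<^sup>l c - (1-\<alpha>)\<alpha>\<^sup>k\<^sup>+\<^sup>l c \<ge> 0\<close> (as \<open>\<alpha> \<le> 1 - \<alpha>\<close>), so it is maximised at \<open>p\<close>;
  on \<open>[q, 1]\<close>, with \<open>q = k/(k+l)\<close>, \<open>f\<close> is constant and \<open>f\<^sub>*\<close> is non-increasing, so it is
  maximised at \<open>q\<close>. In between, \<open>f(x) = x\<^sup>k(1-x)\<^sup>l\<close> is continuous, and both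
  linear pieces of \<open>f\<close> are chosen to agree with it at \<open>p\<close> and \<open>q\<close>; hence a maximiser of
  \<open>f\<^sub>*\<close> on the compact interval \<open>[p, q]\<close> is a global one.
\<close>

definition fpw_lo :: "nat \<Rightarrow> nat \<Rightarrow> real" where
  "fpw_lo k l = (real k - 1) / (real k + real l - 1)"

definition fpw_hi :: "nat \<Rightarrow> nat \<Rightarrow> real" where
  "fpw_hi k l = real k / (real k + real l)"

lemma max_attained_between:
  fixes g :: "real \<Rightarrow> real"
  assumes "a \<le> b" and "continuous_on {a..b} g"
    and "\<And>x. x \<le> a \<Longrightarrow> g x \<le> g a"
    and "\<And>x. b \<le> x \<Longrightarrow> g x \<le> g b"
  shows "\<exists>d\<in>{a..b}. \<forall>x. g x \<le> g d"
proof -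
  obtain d where d: "d \<in> {a..b}" and max: "\<And>y. y \<in> {a..b} \<Longrightarrow> g y \<le> g d"
    using continuous_attains_sup[OF _ _ assms(2)] assms(1) by auto
  have "g x \<le> g d" for x
  proof -
    consider "x \<le> a" | "x \<in> {a..b}" | "b \<le> x" by fastforce
    then show ?thesis
      using max[of a] max[of b] max[of x] assms(1,3,4) by cases fastforce+
  qed
  with d show ?thesis by blast
qed

lemma one_minus_mult_power_le:
  fixes \<alpha> :: real
  assumes "0 \<le> \<alpha>" and "\<alpha> \<le> 1/2" and "n \<ge> 1"
  shows "(1 - \<alpha>) * \<alpha> ^ n \<le> \<alpha> * (1 - \<alpha>) ^ n"
proof -
  obtain m where n: "n = Suc m" using assms(3) by (cases n) auto
  have "\<alpha> ^ m \<le> (1 - \<alpha>) ^ m" using assms by (intro power_mono) auto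
  then have "\<alpha> * (1 - \<alpha>) * \<alpha> ^ m \<le> \<alpha> * (1 - \<alpha>) * (1 - \<alpha>) ^ m"
    using assms by (intro mult_left_mono) auto
  then show ?thesis unfolding n by (simp add: algebra_simps)
qed

lemma fpw_breakpoints:
  assumes "k \<ge> 1" and "l \<ge> 1"
  shows "0 \<le> fpw_lo k l" "fpw_lo k l \<le> fpw_hi k l" "fpw_hi k l \<le> 1"
  using assms unfolding fpw_lo_def fpw_hi_def
  by (simp_all add: divide_simps) (simp add: algebra_simps)

lemma cst_eq_fpw_lo_power:
  assumes "k \<ge> 1" and "l \<ge> 1"
  shows "cst k l = fpw_lo k l ^ (k - 1) * (1 - fpw_lo k l) ^ l"
proof -
  have pos: "real k + real l - 1 > 0" using assms by simp
  have "1 - fpw_lo k l = real l / (real k + real l - 1)"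
    unfolding fpw_lo_def using pos by (simp add: field_simps)
  moreover have "(real k + real l - 1) ^ (k + l - 1)
      = (real k + real l - 1) ^ (k - 1) * (real k + real l - 1) ^ l"
    using assms by (metis Nat.add_diff_assoc2 power_add)
  ultimately show ?thesis unfolding cst_def fpw_lo_def by (simp add: power_divide)
qed

lemma cst_nonneg: "k \<ge> 1 \<Longrightarrow> l \<ge> 1 \<Longrightarrow> cst k l \<ge> 0"
  using fpw_breakpoints[of k l] by (simp add: cst_eq_fpw_lo_power)

lemma fpw_eq_poly_between:
  assumes "k \<ge> 1" and "l \<ge> 1" and "fpw_lo k l \<le> x" and "x \<le> fpw_hi k l"
  shows "fpw k l x = x ^ k * (1 - x) ^ l"
proof (cases "x = fpw_lo k l")
  case True
  have "cst k l * x = x ^ k * (1 - x) ^ l"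
    using assms(1) unfolding True cst_eq_fpw_lo_power[OF assms(1,2)]
    by (cases k) (simp_all add: algebra_simps)
  then show ?thesis using True unfolding fpw_def fpw_lo_def by simp
next
  case False
  then show ?thesis using assms(3,4) unfolding fpw_def fpw_lo_def fpw_hi_def by simp
qed

lemma fpw_above_hi:
  assumes "k \<ge> 1" and "l \<ge> 1" and "fpw_hi k l \<le> x"
  shows "fpw k l x = fpw k l (fpw_hi k l)"
proof -
  have pos: "real k + real l > 0" using assms by simp
  have "1 - fpw_hi k l = real l / (real k + real l)"
    unfolding fpw_hi_def using pos by (simp add: field_simps)
  then have "fpw k l (fpw_hi k l) = real k ^ k * real l ^ l / (real k + real l) ^ (k + l)"
    using fpw_eq_poly_between[OF assms(1,2) fpw_breakpoints(2)[OF assms(1,2)] order_refl]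
    by (simp add: fpw_hi_def power_divide power_add)
  moreover have "x \<le> fpw_hi k l \<Longrightarrow> x = fpw_hi k l" using assms(3) by simp
  ultimately show ?thesis
    using fpw_breakpoints[OF assms(1,2)]
    unfolding fpw_def fpw_lo_def[symmetric] fpw_hi_def[symmetric] by auto
qed

lemma fstar_le_fstar_lo:
  assumes "k \<ge> 1" and "l \<ge> 1" and "0 \<le> \<alpha>" and "\<alpha> \<le> 1/2" and "x \<le> fpw_lo k l"
  shows "fstar k l \<alpha> x \<le> fstar k l \<alpha> (fpw_lo k l)"
proof -
  have "cst k l * ((1 - \<alpha>) * \<alpha> ^ (k + l)) \<le> cst k l * (\<alpha> * (1 - \<alpha>) ^ (k + l))"
    using assms one_minus_mult_power_le[of \<alpha> "k + l"] cst_nonneg[of k l]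
    by (intro mult_left_mono) auto
  then have "(\<alpha> * (1 - \<alpha>) ^ (k + l) * cst k l - cst k l * (1 - \<alpha>) * \<alpha> ^ (k + l)) * x
      \<le> (\<alpha> * (1 - \<alpha>) ^ (k + l) * cst k l - cst k l * (1 - \<alpha>) * \<alpha> ^ (k + l)) * fpw_lo k l"
    using assms(5) by (intro mult_left_mono) (auto simp: algebra_simps)
  then show ?thesis
    using assms(5) unfolding fstar_def fpw_def fpw_lo_def[symmetric]
    by (simp add: algebra_simps)
qed

lemma fstar_le_fstar_hi:
  assumes "k \<ge> 1" and "l \<ge> 1" and "0 \<le> \<alpha>" and "\<alpha> \<le> 1/2" and "fpw_hi k l \<le> x"
  shows "fstar k l \<alpha> x \<le> fstar k l \<alpha> (fpw_hi k l)"
proof -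
  have "cst k l * (1 - \<alpha>) * \<alpha> ^ (k + l) * (1 - x)
      \<le> cst k l * (1 - \<alpha>) * \<alpha> ^ (k + l) * (1 - fpw_hi k l)"
    using assms cst_nonneg[of k l] by (intro mult_left_mono) auto
  then show ?thesis unfolding fstar_def fpw_above_hi[OF assms(1,2,5)] by simp
qed

lemma continuous_on_fstar_between:
  assumes "k \<ge> 1" and "l \<ge> 1"
  shows "continuous_on {fpw_lo k l..fpw_hi k l} (fstar k l \<alpha>)"
proof -
  have "continuous_on {fpw_lo k l..fpw_hi k l}
      (\<lambda>x. \<alpha> * (1 - \<alpha>) ^ (k + l) * (x ^ k * (1 - x) ^ l) + cst k l * (1 - \<alpha>) * \<alpha> ^ (k + l) * (1 - x))"
    by (intro continuous_intros)
  then show ?thesis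
    by (rule continuous_on_cong[THEN iffD1, rotated 2])
      (simp_all add: fstar_def fpw_eq_poly_between[OF assms])
qed

theorem lemma2p5:
  fixes k l :: nat and \<alpha> :: real
  assumes "k \<ge> l" and "l \<ge> 1" and "k + l \<ge> 6"
    and "0 \<le> \<alpha>" and "\<alpha> \<le> 1/2"
  shows "\<exists>d. (real k - 1) / (real k + real l - 1) \<le> d \<and> d \<le> real k / (real k + real l)
            \<and> (\<forall>x\<in>{0..1}. fstar k l \<alpha> x \<le> fstar k l \<alpha> d)"
proof -
  have k: "k \<ge> 1" using assms(1,2) by simp
  have "\<exists>d\<in>{fpw_lo k l..fpw_hi k l}. \<forall>x. fstar k l \<alpha> x \<le> fstar k l \<alpha> d"
    using k assms(2,4,5)
    by (intro max_attained_between fpw_breakpoints continuous_on_fstar_between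
        fstar_le_fstar_lo fstar_le_fstar_hi)
  then show ?thesis unfolding fpw_lo_def fpw_hi_def by auto
qed

end
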